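(* Let $X=\{x_1,\ldots,x_n\}$ be a configuration of distinct points in a real Euclidean affine space, $s_{ij}=\overrightarrow{x_ix_j}^2$, and let $\mathcal{B}(X)=(s_{ij})_{1\le i,j\le n}$ (with zero diagonal) and $\mathcal{C}(X)=\begin{pmatrix}0&\mathbf{1}^T\\ \mathbf{1}&\mathcal{B}(X)\end{pmatrix}$, where $\mathbf{1}=(1,\ldots,1)^T\in\mathbb{R}^n$. Let $\mu_0^{-1}(0)=\{W\in\mathbb{R}^n:\mathbf{1}^TW=0\}$. Then $\ker\mathcal{B}(X)\cap\mu_0^{-1}(0)\subseteq\mathbb{W}_0(X)$, and $\mathbb{W}_0(X)$ is isomorphic to $\ker\mathcal{C}(X)$ via $W=(w_1,\ldots,w_n)\mapsto(w_0,w_1,\ldots,w_n)$ with $w_0=-\sum_{j=1}^n w_js_{ij}$ (independent of $i$). Moreover $\ker\mathcal{B}(X)\cap\mu_0^{-1}(0)=\mathbb{W}_0(X)$ if and only if every weighted system $(X,w)$ with $\mu_0=0$ and $\mu_1=\overrightarrow{O}$ also has $\mu_2=0$; these conditions are fulfilled if $X$ is co-spherical.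
   Context: For a weight function $w$ on $X$ (identified with $(w_1,\ldots,w_n)$), $\mu_0=\sum_j w_j$, $\mu_1(p)=\sum_j w_j\overrightarrow{px_j}$ and $\mu_2(p)=\sum_jw_j\overrightarrow{px_j}^2$ for points $p$. $\mathbb{W}_0(X)$ is the space of weight vectors with $\mu_1$ identically zero. $X$ is co-spherical if some point is equidistant from all points of $X$. *)

theory Defs
  imports "HOL-Analysis.Analysis"
begin

text \<open>A configuration X = {x_1,...,x_n} is a map x :: 'n \<Rightarrow> 'a from a finite index type
  into a Euclidean space; weight vectors are elements of real^'n.\<close>

definition mu0 :: "real^'n \<Rightarrow> real" where
  "mu0 w = (\<Sum>j\<in>UNIV. w $ j)"

definition mu1 :: "('n::finite \<Rightarrow> 'a::euclidean_space) \<Rightarrow> real^'n \<Rightarrow> 'a \<Rightarrow> 'a" where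
  "mu1 x w p = (\<Sum>j\<in>UNIV. (w $ j) *\<^sub>R (x j - p))"

definition mu2 :: "('n::finite \<Rightarrow> 'a::euclidean_space) \<Rightarrow> real^'n \<Rightarrow> 'a \<Rightarrow> real" where
  "mu2 x w p = (\<Sum>j\<in>UNIV. (w $ j) * (norm (x j - p))\<^sup>2)"

definition W0 :: "('n::finite \<Rightarrow> 'a::euclidean_space) \<Rightarrow> (real^'n) set" where
  "W0 x = {w. \<forall>p. mu1 x w p = 0}"

definition sqd :: "('n::finite \<Rightarrow> 'a::euclidean_space) \<Rightarrow> 'n \<Rightarrow> 'n \<Rightarrow> real" where
  "sqd x i j = (norm (x j - x i))\<^sup>2"

definition Bmat :: "('n::finite \<Rightarrow> 'a::euclidean_space) \<Rightarrow> real^'n^'n" where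
  "Bmat x = (\<chi> i j. sqd x i j)"

text \<open>Index None plays the role of row/column 0.\<close>
definition Cmat :: "('n::finite \<Rightarrow> 'a::euclidean_space) \<Rightarrow> real^('n option)^('n option)" where
  "Cmat x = (\<chi> r c. (case (r, c) of
       (None, None) \<Rightarrow> 0
     | (None, Some _) \<Rightarrow> 1
     | (Some _, None) \<Rightarrow> 1
     | (Some i, Some j) \<Rightarrow> sqd x i j))"

definition wext :: "('n::finite \<Rightarrow> 'a::euclidean_space) \<Rightarrow> 'n \<Rightarrow> real^'n \<Rightarrow> real^('n option)" where
  "wext x i w = (\<chi> k. (case k of
       None \<Rightarrow> - (\<Sum>j\<in>UNIV. (w $ j) * sqd x i j)
     | Some j \<Rightarrow> w $ j))"

definition cospherical :: "('n \<Rightarrow> 'a::real_normed_vector) \<Rightarrow> bool" where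
  "cospherical x = (\<exists>c r. \<forall>j. dist c (x j) = r)"

end

theory Submission
  imports Defs
begin

text \<open>Expanding the squares gives \<open>\<mu>\<^sub>1(p) = \<mu>\<^sub>1(O) - \<mu>\<^sub>0 p\<close> and
  \<open>\<mu>\<^sub>2(p) = \<mu>\<^sub>2(O) - 2 p\<cdot>\<mu>\<^sub>1(O) + \<mu>\<^sub>0 |p|\<^sup>2\<close>. Hence \<open>\<mu>\<^sub>1 \<equiv> 0\<close> means \<open>\<mu>\<^sub>0 = 0\<close> and \<open>\<mu>\<^sub>1(O) = 0\<close>,
  and then \<open>\<mu>\<^sub>2\<close> is constant; row \<open>i\<close> of \<open>\<B>(X) W\<close> is \<open>\<mu>\<^sub>2(x\<^sub>i)\<close>. Conversely, if \<open>\<mu>\<^sub>0 = 0\<close> and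
  \<open>\<mu>\<^sub>2(x\<^sub>i)\<close> takes the same value for all \<open>i\<close>, then
  \<open>0 = \<Sum>\<^sub>i w\<^sub>i \<mu>\<^sub>2(x\<^sub>i) = -2 |\<mu>\<^sub>1(O)|\<^sup>2\<close>, so \<open>W \<in> \<W>\<^sub>0(X)\<close>. This single fact yields both the inclusion
  \<open>ker \<B>(X) \<inter> \<mu>\<^sub>0\<^sup>-\<^sup>1(0) \<subseteq> \<W>\<^sub>0(X)\<close> and the description of \<open>ker \<C>(X)\<close>, whose rows say exactly
  \<open>\<mu>\<^sub>0 = 0\<close> and \<open>\<mu>\<^sub>2(x\<^sub>i) = -w\<^sub>0\<close>. For co-spherical \<open>X\<close> with centre \<open>c\<close> and radius \<open>r\<close>,
  \<open>\<mu>\<^sub>2(c) = r\<^sup>2 \<mu>\<^sub>0 = 0\<close>.\<close>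

definition moment1 :: "('n::finite \<Rightarrow> 'a::euclidean_space) \<Rightarrow> real^'n \<Rightarrow> 'a" where
  "moment1 x w = (\<Sum>j\<in>UNIV. w $ j *\<^sub>R x j)"

definition moment2 :: "('n::finite \<Rightarrow> 'a::euclidean_space) \<Rightarrow> real^'n \<Rightarrow> real" where
  "moment2 x w = (\<Sum>j\<in>UNIV. w $ j * (norm (x j))\<^sup>2)"

lemma mu1_eq_moments: "mu1 x w p = moment1 x w - mu0 w *\<^sub>R p"
  unfolding mu1_def mu0_def moment1_def
  by (simp add: scaleR_diff_right sum_subtractf scaleR_sum_left)

lemma mu2_eq_moments: "mu2 x w p = moment2 x w - 2 * (p \<bullet> moment1 x w) + mu0 w * (norm p)\<^sup>2"
proof -
  have "mu2 x w p = (\<Sum>j\<in>UNIV. w $ j * (norm (x j))\<^sup>2 - 2 * (w $ j * (p \<bullet> x j)) + w $ j * (norm p)\<^sup>2)"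
    unfolding mu2_def
    by (intro sum.cong refl) (simp add: power2_norm_eq_inner inner_diff algebra_simps inner_commute)
  also have "\<dots> = moment2 x w - 2 * (\<Sum>j\<in>UNIV. w $ j * (p \<bullet> x j)) + mu0 w * (norm p)\<^sup>2"
    unfolding moment2_def mu0_def
    by (simp add: sum.distrib sum_subtractf sum_distrib_left sum_distrib_right)
  also have "(\<Sum>j\<in>UNIV. w $ j * (p \<bullet> x j)) = p \<bullet> moment1 x w"
    unfolding moment1_def by (simp add: inner_sum_right)
  finally show ?thesis .
qed

lemma W0_iff:
  fixes x :: "'n::finite \<Rightarrow> 'a::euclidean_space"
  shows "w \<in> W0 x \<longleftrightarrow> mu0 w = 0 \<and> moment1 x w = 0"
proof
  assume "w \<in> W0 x"
  hence mu1_0: "\<And>p. mu1 x w p = 0" by (simp add: W0_def)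
  obtain b :: 'a where "b \<in> Basis" using nonempty_Basis by blast
  hence "b \<noteq> 0" by auto
  moreover have "mu0 w *\<^sub>R b = 0" using mu1_0[of b] mu1_0[of 0] by (simp add: mu1_eq_moments)
  ultimately show "mu0 w = 0 \<and> moment1 x w = 0" using mu1_0[of 0] by (simp add: mu1_eq_moments)
qed (simp add: W0_def mu1_eq_moments)

lemma W0_eq: "W0 x = {w. mu0 w = 0 \<and> (\<forall>p. mu1 x w p = 0)}"
  using W0_iff by (auto simp: W0_def)

lemma mu2_W0_independent: "w \<in> W0 x \<Longrightarrow> mu2 x w p = mu2 x w q"
  by (simp add: W0_iff mu2_eq_moments)

lemma sum_sqd_eq_mu2: "(\<Sum>j\<in>UNIV. w $ j * sqd x i j) = mu2 x w (x i)"
  unfolding mu2_def sqd_def by simp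

lemma Bmat_mult_vec_nth: "(Bmat x *v w) $ i = mu2 x w (x i)"
  unfolding Bmat_def matrix_vector_mult_def by (simp add: mult.commute flip: sum_sqd_eq_mu2)

lemma Bmat_mult_vec_eq_0_iff: "Bmat x *v w = 0 \<longleftrightarrow> (\<forall>i. mu2 x w (x i) = 0)"
  by (simp add: vec_eq_iff Bmat_mult_vec_nth)

lemma moment1_eq_0_if_mu2_const_at_points:
  assumes "mu0 w = 0" and "\<And>i. mu2 x w (x i) = K"
  shows "moment1 x w = 0"
proof -
  have "0 = (\<Sum>i\<in>UNIV. w $ i * mu2 x w (x i))"
    using assms by (simp add: mu0_def flip: sum_distrib_right)
  also have "\<dots> = (\<Sum>i\<in>UNIV. w $ i * moment2 x w - 2 * (w $ i * (x i \<bullet> moment1 x w)))"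
    using assms(1) by (intro sum.cong refl) (simp add: mu2_eq_moments algebra_simps)
  also have "\<dots> = - 2 * (moment1 x w \<bullet> moment1 x w)"
    using assms(1)
    by (simp add: sum_subtractf mu0_def moment1_def inner_sum_left sum_distrib_left sum_negf
        flip: sum_distrib_right)
  finally show ?thesis by simp
qed

lemma Bmat_kernel_subset_W0: "{w. Bmat x *v w = 0 \<and> mu0 w = 0} \<subseteq> W0 x"
proof clarify
  fix w assume "Bmat x *v w = 0" and "mu0 w = 0"
  with moment1_eq_0_if_mu2_const_at_points[of w x 0] show "w \<in> W0 x"
    by (simp add: W0_iff Bmat_mult_vec_eq_0_iff)
qed

lemma Bmat_kernel_eq_W0_iff:
  "{w. Bmat x *v w = 0 \<and> mu0 w = 0} = W0 x \<longleftrightarrow> (\<forall>w\<in>W0 x. \<forall>p. mu2 x w p = 0)"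
proof
  assume "{w. Bmat x *v w = 0 \<and> mu0 w = 0} = W0 x"
  thus "\<forall>w\<in>W0 x. \<forall>p. mu2 x w p = 0"
    by (metis (mono_tags) Bmat_mult_vec_eq_0_iff mem_Collect_eq mu2_W0_independent)
next
  assume "\<forall>w\<in>W0 x. \<forall>p. mu2 x w p = 0"
  hence "W0 x \<subseteq> {w. Bmat x *v w = 0 \<and> mu0 w = 0}"
    by (auto simp: Bmat_mult_vec_eq_0_iff W0_iff)
  with Bmat_kernel_subset_W0 show "{w. Bmat x *v w = 0 \<and> mu0 w = 0} = W0 x" by blast
qed

lemma cospherical_mu2_W0:
  assumes "cospherical x" and "w \<in> W0 x"
  shows "mu2 x w p = 0"
proof -
  obtain c r where centre: "\<And>j. dist c (x j) = r"
    using assms(1) unfolding cospherical_def by blast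
  have "mu2 x w c = (\<Sum>j\<in>UNIV. w $ j * r\<^sup>2)"
    unfolding mu2_def using centre by (simp add: dist_norm norm_minus_commute)
  also have "\<dots> = 0"
    using assms(2) by (simp add: W0_iff mu0_def flip: sum_distrib_right)
  finally show ?thesis using mu2_W0_independent[OF assms(2)] by metis
qed

lemma sum_UNIV_option: "sum f (UNIV :: 'n::finite option set) = f None + (\<Sum>j\<in>UNIV. f (Some j))"
proof -
  have "sum f (UNIV :: 'n option set) = f None + sum f (range Some)"
    by (simp add: UNIV_option_conv)
  also have "sum f (range Some) = (\<Sum>j\<in>UNIV. f (Some j))"
    by (subst sum.reindex) auto
  finally show ?thesis .
qed

lemma Cmat_mult_vec_None: "(Cmat x *v v) $ None = (\<Sum>j\<in>UNIV. v $ Some j)"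
  unfolding Cmat_def matrix_vector_mult_def by (simp add: sum_UNIV_option)

lemma Cmat_mult_vec_Some: "(Cmat x *v v) $ Some i = v $ None + mu2 x (\<chi> j. v $ Some j) (x i)"
  unfolding Cmat_def matrix_vector_mult_def
  by (simp add: sum_UNIV_option mult.commute flip: sum_sqd_eq_mu2)

lemma wext_Some: "wext x i w $ Some j = w $ j"
  by (simp add: wext_def)

lemma wext_None: "wext x i w $ None = - mu2 x w (x i)"
  by (simp add: wext_def sum_sqd_eq_mu2)

lemma linear_wext: "linear (wext x i)"
  unfolding wext_def
  by (rule linearI) (auto simp: vec_eq_iff sum.distrib sum_distrib_left algebra_simps split: option.splits)

lemma inj_wext: "inj (wext x i)"
  by (rule injI) (metis vec_eq_iff wext_Some)

lemma wext_image_W0: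
  fixes x :: "'n::finite \<Rightarrow> 'a::euclidean_space"
  shows "wext x i ` W0 x = {v. Cmat x *v v = 0}"
proof safe
  fix w assume w: "w \<in> W0 x"
  show "Cmat x *v wext x i w = 0"
  proof (subst vec_eq_iff, rule allI)
    fix k show "(Cmat x *v wext x i w) $ k = 0 $ k"
      using w mu2_W0_independent[OF w]
      by (cases k) (simp_all add: Cmat_mult_vec_None Cmat_mult_vec_Some wext_Some wext_None
          W0_iff mu0_def vec_lambda_eta)
  qed
next
  fix v assume v: "Cmat x *v v = 0"
  define w :: "real^'n" where "w = (\<chi> j. v $ Some j)"
  have mu0_w: "mu0 w = 0"
    using arg_cong[OF v, of "\<lambda>u. u $ None"] by (simp add: Cmat_mult_vec_None w_def mu0_def)
  have mu2_w: "mu2 x w (x i') = - v $ None" for i'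
    using arg_cong[OF v, of "\<lambda>u. u $ Some i'"] by (simp add: Cmat_mult_vec_Some w_def)
  have "w \<in> W0 x"
    using moment1_eq_0_if_mu2_const_at_points[OF mu0_w mu2_w] mu0_w by (simp add: W0_iff)
  moreover have "wext x i w $ k = v $ k" for k
    by (cases k) (simp add: wext_None mu2_w, simp add: wext_Some w_def)
  hence "wext x i w = v" by (simp add: vec_eq_iff)
  ultimately show "v \<in> wext x i ` W0 x" by blast
qed

theorem theoremA2p1:
  fixes x :: "'n::finite \<Rightarrow> 'a::euclidean_space"
  assumes "inj x"
  shows "{w. Bmat x *v w = 0 \<and> mu0 w = 0} \<subseteq> W0 x
    \<and> (\<forall>w\<in>W0 x. \<forall>i i'. (\<Sum>j\<in>UNIV. (w $ j) * sqd x i j) = (\<Sum>j\<in>UNIV. (w $ j) * sqd x i' j))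
    \<and> (\<forall>i. linear (wext x i) \<and> bij_betw (wext x i) (W0 x) {v. Cmat x *v v = 0})
    \<and> (({w. Bmat x *v w = 0 \<and> mu0 w = 0} = W0 x) \<longleftrightarrow>
         (\<forall>w. mu0 w = 0 \<and> (\<forall>p. mu1 x w p = 0) \<longrightarrow> (\<forall>p. mu2 x w p = 0)))
    \<and> (cospherical x \<longrightarrow> {w. Bmat x *v w = 0 \<and> mu0 w = 0} = W0 x)"
proof -
  have "\<forall>w\<in>W0 x. \<forall>i i'. (\<Sum>j\<in>UNIV. w $ j * sqd x i j) = (\<Sum>j\<in>UNIV. w $ j * sqd x i' j)"
    by (metis sum_sqd_eq_mu2 mu2_W0_independent)
  moreover have "bij_betw (wext x i) (W0 x) {v. Cmat x *v v = 0}" for i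
    by (simp add: bij_betw_def wext_image_W0 inj_on_subset[OF inj_wext])
  moreover have "{w. Bmat x *v w = 0 \<and> mu0 w = 0} = W0 x \<longleftrightarrow>
      (\<forall>w. mu0 w = 0 \<and> (\<forall>p. mu1 x w p = 0) \<longrightarrow> (\<forall>p. mu2 x w p = 0))"
    unfolding Bmat_kernel_eq_W0_iff by (simp add: W0_eq)
  moreover have "cospherical x \<longrightarrow> {w. Bmat x *v w = 0 \<and> mu0 w = 0} = W0 x"
    by (simp add: Bmat_kernel_eq_W0_iff cospherical_mu2_W0)
  ultimately show ?thesis
    by (intro conjI allI Bmat_kernel_subset_W0 linear_wext)
qed

end
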